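(* Let $a,q$ be complex numbers with $q\ne0$, and let $B_{n,1}(a,0)$ ($n\ge1$) be defined by $z=\sum_{n=1}^\infty B_{n,1}(a,0)\,z^n(az;q)_n$ in $\mathbb{C}[[z]]$. Then every $F(z)\in\mathbb{C}[[z]]$ has the expansion $$F(z)=\sum_{n=0}^{\infty}c_nz^{n}(az;q)_n,$$ where $$c_n=[z^{n}]\Big\{\frac{F(z)}{(az;q)_n}\Big\}-a\sum_{k=0}^{n-1}B_{n-k,1}(a,0)\,q^{(n-k)k}\,[z^{k}]\Big\{\frac{F(z)}{(az;q)_{k+1}}\Big\}.$$
   Context: $(x;q)_n=\prod_{j=0}^{n-1}(1-xq^j)$ for $n\ge0$, $(x;q)_0=1$; quotients are regarded as formal power series in $z$, and $[z^m]\{f\}$ is the coefficient of $z^m$ in $f$. Empty sums are $0$. *)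

theory Defs
  imports "HOL-Computational_Algebra.Formal_Power_Series"
begin

definition qpoch_fps :: "complex \<Rightarrow> complex \<Rightarrow> nat \<Rightarrow> complex fps" where
  "qpoch_fps a q n = (\<Prod>j<n. 1 - fps_const (a * q ^ j) * fps_X)"

end

theory Submission
  imports Defs
begin

text \<open>
  Writing P_n = (az;q)_n, the identity F/P_n = (1 - aq^n z) F/P_(n+1) lets one peel off the
  coefficient of z^n of F/P_n, which telescopes to
    F + sum_(k<N) a q^k [z^k]{F/P_(k+1)} z^(k+1) P_k = sum_(n<N) [z^n]{F/P_n} z^n P_n + O(z^N).
  Each stray term q^k z^(k+1) P_k is re-expanded in the basis z^m P_m by substituting
  z := q^k z in the defining identity of B and multiplying by z^k P_k, because
  P_k(z) P_m(q^k z) = P_(k+m)(z). Collecting coefficients of z^n P_n gives c_n. All identities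
  are compared modulo z^M, which is exactly convergence in the topology of formal power series.
\<close>

unbundle fps_syntax

lemma fps_cutoff_eq_0_if_X_power_dvd:
  fixes f :: "'a::comm_ring_1 fps"
  assumes "fps_X ^ n dvd f" "m \<le> n"
  shows "fps_cutoff m f = 0"
proof -
  from assms(1) obtain g where "f = fps_X ^ n * g" by (elim dvdE)
  with assms(2) show ?thesis by (simp add: fps_eq_iff fps_X_power_mult_nth)
qed

lemma fps_cutoff_sum: "fps_cutoff n (sum f A) = (\<Sum>k\<in>A. fps_cutoff n (f k))"
  by (rule fps_ext) (simp add: fps_sum_nth)

lemma fps_cutoff_mult_left_cong:
  fixes f g h :: "'a::comm_ring_1 fps"
  assumes "fps_cutoff n f = fps_cutoff n g"
  shows "fps_cutoff n (h * f) = fps_cutoff n (h * g)"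
proof -
  have "(h * f) $ k = (h * g) $ k" if "k < n" for k
    using fps_cutoff_right_mult_nth[OF that, of h f] fps_cutoff_right_mult_nth[OF that, of h g] assms
    by simp
  then show ?thesis by (simp add: fps_cutoff_eq_fps_cutoff_iff)
qed

lemma fps_cutoff_compose_linear_cong:
  fixes f g :: "'a::comm_ring_1 fps"
  assumes "fps_cutoff n f = fps_cutoff n g"
  shows "fps_cutoff n (f oo (fps_const c * fps_X)) = fps_cutoff n (g oo (fps_const c * fps_X))"
  using assms by (simp add: fps_cutoff_eq_fps_cutoff_iff)

lemma tendsto_fps_iff_cutoff:
  fixes f :: "'b \<Rightarrow> 'a::group_add fps"
  shows "(f \<longlongrightarrow> g) F \<longleftrightarrow> (\<forall>n. eventually (\<lambda>x. fps_cutoff n (f x) = fps_cutoff n g) F)"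
proof -
  have "eventually (\<lambda>x. fps_cutoff n (f x) = fps_cutoff n g) F \<longleftrightarrow>
        (\<forall>i<n. eventually (\<lambda>x. f x $ i = g $ i) F)" for n
    using eventually_ball_finite_distrib[of "{..<n}" "\<lambda>x i. f x $ i = g $ i" F]
    by (simp add: fps_cutoff_eq_fps_cutoff_iff Ball_def)
  then show ?thesis unfolding tendsto_fps_iff by (metis lessI)
qed

lemma sums_fps_mult_left:
  fixes f :: "nat \<Rightarrow> 'a::comm_ring_1 fps"
  assumes "f sums s"
  shows "(\<lambda>n. g * f n) sums (g * s)"
proof -
  have "eventually (\<lambda>N. fps_cutoff m (g * (\<Sum>n<N. f n)) = fps_cutoff m (g * s)) sequentially" for m
  proof -
    from assms have "eventually (\<lambda>N. fps_cutoff m (\<Sum>n<N. f n) = fps_cutoff m s) sequentially"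
      unfolding sums_def tendsto_fps_iff_cutoff by blast
    then show ?thesis by eventually_elim (rule fps_cutoff_mult_left_cong)
  qed
  then show ?thesis
    unfolding sums_def tendsto_fps_iff_cutoff by (simp only: sum_distrib_left simp_thms)
qed

lemma sums_fps_compose_linear:
  fixes f :: "nat \<Rightarrow> 'a::comm_ring_1 fps"
  assumes "f sums s"
  shows "(\<lambda>n. f n oo (fps_const c * fps_X)) sums (s oo (fps_const c * fps_X))"
proof -
  have "eventually (\<lambda>N. fps_cutoff m ((\<Sum>n<N. f n) oo (fps_const c * fps_X))
          = fps_cutoff m (s oo (fps_const c * fps_X))) sequentially" for m
  proof -
    from assms have "eventually (\<lambda>N. fps_cutoff m (\<Sum>n<N. f n) = fps_cutoff m s) sequentially"
      unfolding sums_def tendsto_fps_iff_cutoff by blast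
    then show ?thesis by eventually_elim (rule fps_cutoff_compose_linear_cong)
  qed
  then show ?thesis
    unfolding sums_def tendsto_fps_iff_cutoff by (simp only: fps_compose_sum_distrib simp_thms)
qed

lemma fps_cutoff_sum_lessThan_stable:
  fixes A :: "nat \<Rightarrow> 'a::comm_ring_1 fps"
  assumes "\<And>n. fps_X ^ n dvd A n" "m \<le> N"
  shows "fps_cutoff m (\<Sum>n<N. A n) = fps_cutoff m (\<Sum>n<m. A n)"
proof -
  have "(\<Sum>n<N. A n) = (\<Sum>n<m. A n) + (\<Sum>n=m..<N. A n)"
    using assms(2) by (metis atLeast0LessThan sum.atLeastLessThan_concat zero_le)
  moreover have "fps_cutoff m (\<Sum>n=m..<N. A n) = 0"
    by (simp add: fps_cutoff_sum fps_cutoff_eq_0_if_X_power_dvd[OF assms(1)])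
  ultimately show ?thesis by (simp add: fps_cutoff_add)
qed

lemma sums_fps_iff_cutoff:
  fixes A :: "nat \<Rightarrow> 'a::comm_ring_1 fps"
  assumes "\<And>n. fps_X ^ n dvd A n"
  shows "A sums f \<longleftrightarrow> (\<forall>m. fps_cutoff m (\<Sum>n<m. A n) = fps_cutoff m f)"
proof -
  have "eventually (\<lambda>N. fps_cutoff m (\<Sum>n<N. A n) = fps_cutoff m f) sequentially
        \<longleftrightarrow> fps_cutoff m (\<Sum>n<m. A n) = fps_cutoff m f" for m
    using fps_cutoff_sum_lessThan_stable[OF assms, of m]
    unfolding eventually_sequentially by (metis max.cobounded1 max.cobounded2)
  then show ?thesis unfolding sums_def tendsto_fps_iff_cutoff by blast
qed

lemma qpoch_fps_0 [simp]: "qpoch_fps a q 0 = 1"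
  by (simp add: qpoch_fps_def)

lemma qpoch_fps_Suc: "qpoch_fps a q (Suc n) = qpoch_fps a q n * (1 - fps_const (a * q ^ n) * fps_X)"
  by (simp add: qpoch_fps_def)

lemma qpoch_fps_nth_0 [simp]: "qpoch_fps a q n $ 0 = 1"
  by (induction n) (simp_all add: qpoch_fps_Suc fps_mult_nth)

lemma qpoch_fps_divide_Suc:
  "F / qpoch_fps a q n = (1 - fps_const (a * q ^ n) * fps_X) * (F / qpoch_fps a q (Suc n))"
proof -
  let ?L = "1 - fps_const (a * q ^ n) * fps_X"
  have "?L * (F / qpoch_fps a q (Suc n)) = F * inverse (qpoch_fps a q n) * (inverse ?L * ?L)"
    by (simp add: qpoch_fps_Suc fps_divide_unit fps_inverse_mult mult_ac)
  also have "\<dots> = F / qpoch_fps a q n"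
    by (simp add: inverse_mult_eq_1 fps_divide_unit)
  finally show ?thesis by simp
qed

lemma qpoch_fps_compose_linear:
  "qpoch_fps a q k * (qpoch_fps a q m oo (fps_const (q ^ k) * fps_X)) = qpoch_fps a q (k + m)"
proof (induction m)
  case (Suc m)
  have "(1 - fps_const (a * q ^ m) * fps_X) oo (fps_const (q ^ k) * fps_X)
        = 1 - fps_const (a * q ^ (k + m)) * fps_X"
    by (simp add: fps_compose_sub_distrib fps_compose_mult_distrib power_add mult_ac)
  then show ?case
    using Suc by (simp add: qpoch_fps_Suc fps_compose_mult_distrib mult.assoc[symmetric])
qed simp

lemma fps_shift_times_linear:
  fixes W :: "'a::comm_ring_1 fps" and c :: 'a
  defines "L \<equiv> 1 - fps_const c * fps_X"
  shows "fps_const (c * W $ n) * fps_X + fps_shift n (L * W)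
       = fps_const ((L * W) $ n) + fps_X * (L * fps_shift (Suc n) W)"
proof (rule fps_ext)
  fix i
  have LW: "(L * W) $ j = W $ j - (if j = 0 then 0 else c * W $ (j - 1))" for j
    by (simp add: L_def algebra_simps)
  have "L * fps_shift (Suc n) W = fps_shift (Suc n) W - fps_const c * (fps_X * fps_shift (Suc n) W)"
    by (simp add: L_def algebra_simps)
  then show "(fps_const (c * W $ n) * fps_X + fps_shift n (L * W)) $ i
           = (fps_const ((L * W) $ n) + fps_X * (L * fps_shift (Suc n) W)) $ i"
    by (cases i; cases "i - 1") (simp_all add: LW mult.commute[of "fps_const _" fps_X])
qed

lemma qpoch_fps_telescope:
  fixes F :: "complex fps"
  shows "F + (\<Sum>k<N. fps_const (a * q ^ k * (F / qpoch_fps a q (Suc k)) $ k)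
                        * fps_X ^ Suc k * qpoch_fps a q k)
       = (\<Sum>n<N. fps_const ((F / qpoch_fps a q n) $ n) * fps_X ^ n * qpoch_fps a q n)
         + fps_X ^ N * qpoch_fps a q N * fps_shift N (F / qpoch_fps a q N)"
proof (induction N)
  case (Suc N)
  let ?P = "qpoch_fps a q N" and ?c = "a * q ^ N" and ?W = "F / qpoch_fps a q (Suc N)"
  have "fps_const (?c * ?W $ N) * fps_X ^ Suc N * ?P + fps_X ^ N * ?P * fps_shift N (F / ?P)
      = fps_X ^ N * ?P * (fps_const (?c * ?W $ N) * fps_X + fps_shift N (F / ?P))"
    by (simp add: algebra_simps)
  also have "\<dots> = fps_X ^ N * ?P * (fps_const ((F / ?P) $ N)
                    + fps_X * ((1 - fps_const ?c * fps_X) * fps_shift (Suc N) ?W))"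
    using fps_shift_times_linear[of ?c ?W N] by (simp only: qpoch_fps_divide_Suc[of F a q N])
  also have "\<dots> = fps_const ((F / ?P) $ N) * fps_X ^ N * ?P
                  + fps_X ^ Suc N * qpoch_fps a q (Suc N) * fps_shift (Suc N) ?W"
    by (simp add: qpoch_fps_Suc algebra_simps)
  finally have step: "fps_const (?c * ?W $ N) * fps_X ^ Suc N * ?P + fps_X ^ N * ?P * fps_shift N (F / ?P)
      = fps_const ((F / ?P) $ N) * fps_X ^ N * ?P
        + fps_X ^ Suc N * qpoch_fps a q (Suc N) * fps_shift (Suc N) ?W" .
  show ?case
    unfolding sum.lessThan_Suc add.assoc[symmetric] Suc.IH
    using step by (simp add: ac_simps)
qed simp

lemma qpoch_fps_shifted_expansion:
  fixes B :: "nat \<Rightarrow> complex"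
  assumes B: "(\<lambda>n. fps_const (B (Suc n)) * fps_X ^ Suc n * qpoch_fps a q (Suc n)) sums fps_X"
  shows "(\<lambda>m. if k < m then fps_const (B (m - k) * q ^ ((m - k) * k)) * fps_X ^ m * qpoch_fps a q m
              else 0)
         sums (fps_const (q ^ k) * fps_X ^ Suc k * qpoch_fps a q k)"
proof -
  let ?s = "fps_const (q ^ k) * fps_X"
  have "(\<lambda>n. fps_X ^ k * qpoch_fps a q k
             * ((fps_const (B (Suc n)) * fps_X ^ Suc n * qpoch_fps a q (Suc n)) oo ?s))
        sums (fps_X ^ k * qpoch_fps a q k * (fps_X oo ?s))"
    by (intro sums_fps_mult_left sums_fps_compose_linear B)
  moreover have "fps_X ^ k * qpoch_fps a q k
             * ((fps_const (B (Suc n)) * fps_X ^ Suc n * qpoch_fps a q (Suc n)) oo ?s)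
        = fps_const (B (Suc n) * q ^ (Suc n * k)) * fps_X ^ (n + Suc k) * qpoch_fps a q (n + Suc k)" for n
  proof -
    have "(fps_const (B (Suc n)) * fps_X ^ Suc n * qpoch_fps a q (Suc n)) oo ?s
        = fps_const (B (Suc n) * (q ^ k) ^ Suc n) * fps_X ^ Suc n * (qpoch_fps a q (Suc n) oo ?s)"
      by (simp add: fps_compose_mult_distrib fps_compose_power[symmetric] power_mult_distrib
                    fps_const_power)
    then have "fps_X ^ k * qpoch_fps a q k
             * ((fps_const (B (Suc n)) * fps_X ^ Suc n * qpoch_fps a q (Suc n)) oo ?s)
        = fps_const (B (Suc n) * (q ^ k) ^ Suc n) * (fps_X ^ k * fps_X ^ Suc n)
          * (qpoch_fps a q k * (qpoch_fps a q (Suc n) oo ?s))"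
      by (simp only: mult_ac)
    also have "\<dots> = fps_const (B (Suc n) * (q ^ k) ^ Suc n) * fps_X ^ (k + Suc n)
                      * qpoch_fps a q (k + Suc n)"
      unfolding qpoch_fps_compose_linear power_add ..
    also have "(q ^ k) ^ Suc n = q ^ (Suc n * k)"
      by (metis mult.commute power_mult)
    also have "k + Suc n = n + Suc k"
      by simp
    finally show ?thesis .
  qed
  ultimately have shifted: "(\<lambda>n. fps_const (B (Suc n) * q ^ (Suc n * k)) * fps_X ^ (n + Suc k)
                     * qpoch_fps a q (n + Suc k))
        sums (fps_const (q ^ k) * fps_X ^ Suc k * qpoch_fps a q k)"
    by (simp add: mult_ac)
  show ?thesis
  proof (rule sums_mono_reindex[of "\<lambda>n. n + Suc k", THEN iffD1])
    show "strict_mono (\<lambda>n. n + Suc k)"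
      by (simp add: strict_mono_def)
    show "(if k < m then fps_const (B (m - k) * q ^ ((m - k) * k)) * fps_X ^ m * qpoch_fps a q m
           else 0) = 0" if "m \<notin> range (\<lambda>n. n + Suc k)" for m
    proof -
      from that have "\<not> k < m"
        by (metis (no_types, lifting) Suc_leI add.commute le_add_diff_inverse rangeI)
      then show ?thesis by simp
    qed
  qed (use shifted in simp)
qed

lemma fps_const_sum: "fps_const (sum f A) = (\<Sum>x\<in>A. fps_const (f x))"
  by (induction A rule: infinite_finite_induct) (simp_all flip: fps_const_add)

lemma sum_lessThan_triangle_fps_const:
  fixes Y :: "nat \<Rightarrow> 'a::comm_ring_1 fps"
  shows "(\<Sum>k<M. fps_const (c k) * (\<Sum>m<M. if k < m then fps_const (\<beta> m k) * Y m else 0))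
       = (\<Sum>m<M. fps_const (\<Sum>k<m. c k * \<beta> m k) * Y m)"
proof -
  have "(\<Sum>k<M. fps_const (c k) * (\<Sum>m<M. if k < m then fps_const (\<beta> m k) * Y m else 0))
      = (\<Sum>m<M. \<Sum>k<M. if k < m then fps_const (c k * \<beta> m k) * Y m else 0)"
    unfolding sum_distrib_left
    by (subst sum.swap) (simp only: if_distrib mult_zero_right mult.assoc[symmetric] fps_const_mult)
  also have "\<dots> = (\<Sum>m<M. \<Sum>k<m. fps_const (c k * \<beta> m k) * Y m)"
  proof (rule sum.cong[OF refl])
    fix m assume "m \<in> {..<M}"
    then have "{k \<in> {..<M}. k < m} = {..<m}" by auto
    then show "(\<Sum>k<M. if k < m then fps_const (c k * \<beta> m k) * Y m else 0)
             = (\<Sum>k<m. fps_const (c k * \<beta> m k) * Y m)"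
      using sum.inter_filter[of "{..<M}" "\<lambda>k. fps_const (c k * \<beta> m k) * Y m" "\<lambda>k. k < m"]
      by simp
  qed
  also have "\<dots> = (\<Sum>m<M. fps_const (\<Sum>k<m. c k * \<beta> m k) * Y m)"
    by (simp only: fps_const_sum sum_distrib_right)
  finally show ?thesis .
qed

lemma qpoch_fps_expansion_cutoff:
  fixes a q :: complex and B :: "nat \<Rightarrow> complex" and F :: "complex fps"
  assumes B: "(\<lambda>n. fps_const (B (Suc n)) * fps_X ^ Suc n * qpoch_fps a q (Suc n)) sums fps_X"
  shows "fps_cutoff M (\<Sum>n<M. fps_const
            ((F / qpoch_fps a q n) $ n
             - a * (\<Sum>k<n. B (n - k) * q ^ ((n - k) * k) * (F / qpoch_fps a q (Suc k)) $ k))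
          * fps_X ^ n * qpoch_fps a q n)
         = fps_cutoff M F"
proof -
  define P where "P = qpoch_fps a q"
  define G where "G k = (F / P (Suc k)) $ k" for k
  define \<beta> where "\<beta> m k = B (m - k) * q ^ ((m - k) * k)" for m k
  define T where "T k m = (if k < m then fps_const (\<beta> m k) * (fps_X ^ m * P m) else 0)" for k m
  define R where "R = (\<Sum>n<M. fps_const ((F / P n) $ n) * fps_X ^ n * P n)"
  define S where "S = (\<Sum>k<M. fps_const (a * G k) * (fps_const (q ^ k) * fps_X ^ Suc k * P k))"
  define S' where "S' = (\<Sum>m<M. fps_const (\<Sum>k<m. a * G k * \<beta> m k) * (fps_X ^ m * P m))"
  have "fps_cutoff M (F + S) = fps_cutoff M (R + fps_X ^ M * (P M * fps_shift M (F / P M)))"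
    using qpoch_fps_telescope[of F a q M]
    by (simp add: S_def R_def G_def P_def mult_ac)
  then have telescope: "fps_cutoff M F + fps_cutoff M S = fps_cutoff M R"
    by (simp add: fps_cutoff_add fps_cutoff_eq_0_if_X_power_dvd[of M _ M])
  have T_cutoff: "fps_cutoff M (fps_const (q ^ k) * fps_X ^ Suc k * P k)
                = fps_cutoff M (\<Sum>m<M. T k m)" for k
  proof -
    have "T k sums (fps_const (q ^ k) * fps_X ^ Suc k * P k)"
      using qpoch_fps_shifted_expansion[OF B, of k]
      by (simp only: T_def[abs_def] \<beta>_def P_def mult.assoc)
    moreover have "fps_X ^ m dvd T k m" for m
      by (simp add: T_def)
    ultimately show ?thesis
      using sums_fps_iff_cutoff by metis
  qed
  have "fps_cutoff M S = fps_cutoff M (\<Sum>k<M. fps_const (a * G k) * (\<Sum>m<M. T k m))"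
    unfolding S_def fps_cutoff_sum by (intro sum.cong refl fps_cutoff_mult_left_cong T_cutoff)
  also have "(\<Sum>k<M. fps_const (a * G k) * (\<Sum>m<M. T k m)) = S'"
    unfolding T_def S'_def by (rule sum_lessThan_triangle_fps_const)
  finally have "fps_cutoff M S = fps_cutoff M S'" .
  with telescope have "fps_cutoff M (R - S') = fps_cutoff M F"
    by (metis add_diff_cancel fps_cutoff_diff)
  moreover have "R - S' = (\<Sum>n<M. fps_const ((F / P n) $ n - a * (\<Sum>k<n. \<beta> n k * G k)) * fps_X ^ n * P n)"
  proof -
    have "(\<Sum>k<n. a * G k * \<beta> n k) = a * (\<Sum>k<n. \<beta> n k * G k)" for n
      by (simp add: sum_distrib_left mult_ac)
    then show ?thesis
      unfolding R_def S'_def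
      by (simp only: sum_subtractf[symmetric] fps_const_sub[symmetric] left_diff_distrib mult.assoc)
  qed
  ultimately show ?thesis
    by (simp add: P_def G_def \<beta>_def)
qed

theorem corollary2p3:
  fixes a q :: complex and B :: "nat \<Rightarrow> complex" and F :: "complex fps"
  assumes "q \<noteq> 0"
    and B: "(\<lambda>n. fps_const (B (Suc n)) * fps_X ^ (Suc n) * qpoch_fps a q (Suc n)) sums fps_X"
  shows "(\<lambda>n. fps_const
            (fps_nth (F / qpoch_fps a q n) n
             - a * (\<Sum>k<n. B (n - k) * q ^ ((n - k) * k)
                        * fps_nth (F / qpoch_fps a q (Suc k)) k))
          * fps_X ^ n * qpoch_fps a q n) sums F"
  by (subst sums_fps_iff_cutoff) (simp_all add: qpoch_fps_expansion_cutoff[OF B])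

end
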